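(* Let $x,y>0$, $r,s\in\mathbb{R}$, and $F_{r,s;x,y}(w)=E(r+w,s+w;x,y)$ for $w\in\mathbb{R}$. Then for every $w\in\mathbb{R}$, $$\frac{F_{r,s;x,y}'(w)}{F_{r,s;x,y}(w)}=\frac{F_{r,s;x,y}'(-w-(s+r))}{F_{r,s;x,y}(-w-(s+r))} \quad\text{and}\quad F_{r,s;x,y}(w)\,F_{r,s;x,y}(-w)=\frac{xy\,F_{r,s;x,y}(w)}{F_{r,s;x,y}(w-(s+r))}.$$
   Context: For $x,y>0$ and $r,s\in\mathbb{R}$ the extended mean values are defined by $E(r,s;x,y)=\bigl(\frac{r}{s}\cdot\frac{y^s-x^s}{y^r-x^r}\bigr)^{1/(s-r)}$ if $rs(r-s)(x-y)\neq0$; $E(r,0;x,y)=E(0,r;x,y)=\bigl(\frac1r\cdot\frac{y^r-x^r}{\ln y-\ln x}\bigr)^{1/r}$ if $r(x-y)\neq0$; $E(r,r;x,y)=e^{-1/r}\bigl(\frac{x^{x^r}}{y^{y^r}}\bigr)^{1/(x^r-y^r)}$ if $r(x-y)\neq0$; $E(0,0;x,y)=\sqrt{xy}$ if $x\neq y$; $E(r,s;x,x)=x$. *)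

theory Defs
  imports "HOL-Analysis.Analysis"
begin

definition extmean :: "real \<Rightarrow> real \<Rightarrow> real \<Rightarrow> real \<Rightarrow> real" where
  "extmean r s x y =
    (if x = y then x
     else if r \<noteq> 0 \<and> s \<noteq> 0 \<and> r \<noteq> s then
       ((r / s) * (y powr s - x powr s) / (y powr r - x powr r)) powr (1 / (s - r))
     else if r \<noteq> 0 \<and> s = 0 then
       ((1 / r) * (y powr r - x powr r) / (ln y - ln x)) powr (1 / r)
     else if r = 0 \<and> s \<noteq> 0 then
       ((1 / s) * (y powr s - x powr s) / (ln y - ln x)) powr (1 / s)
     else if r \<noteq> 0 \<and> r = s then
       exp (- 1 / r) * ((x powr (x powr r)) / (y powr (y powr r))) powr (1 / (x powr r - y powr r))
     else sqrt (x * y))"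

end

theory Submission imports Defs begin

(* Put a = ln x, b = ln y and let K(t) = \<integral>_a^b e^(t u) du, an entire function
   given by the power series \<Sum> (b^(n+1) - a^(n+1)) / (n+1)! t^n, with K(t) = (e^(tb) - e^(ta))/t
   for t \<noteq> 0.  For x \<noteq> y the normalised kernel K(t)/(b-a) is positive; its logarithm \<psi>
   (taken to be a t when a = b, the limit case) turns all branches of the definition
   of E into one formula:  E(t,u;x,y) = exp (\<psi>[t,u]), where \<psi>[t,u] is the divided
   difference of \<psi> (its derivative when t = u).  The substitution u \<mapsto> a + b - u gives the
   reflection law \<psi>(-t) = \<psi>(t) - (a+b) t, hence \<psi>[-t,-u] = ln (xy) - \<psi>[t,u], i.e.
   E(-t,-u) E(t,u) = xy.  For F(w) = E(r+w,s+w) this reads F(w) F(-(s+r)-w) = xy; as F is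
   positive and differentiable, differentiating this product identity gives the equality of
   logarithmic derivatives, and substituting -w gives the second identity. *)

section \<open>The exponential kernel\<close>

definition expkern_coeff :: "real \<Rightarrow> real \<Rightarrow> nat \<Rightarrow> real" where
  "expkern_coeff a b n = (b ^ Suc n - a ^ Suc n) / fact (Suc n)"

text \<open>The entire function K(t) = integral of e^(tu) over [a,b], and its derivative series.\<close>
definition expkern :: "real \<Rightarrow> real \<Rightarrow> real \<Rightarrow> real" where
  "expkern a b t = (\<Sum>n. expkern_coeff a b n * t ^ n)"

definition expkern' :: "real \<Rightarrow> real \<Rightarrow> real \<Rightarrow> real" where
  "expkern' a b t = (\<Sum>n. diffs (expkern_coeff a b) n * t ^ n)"

lemma expkern_sums:
  assumes "t \<noteq> 0"
  shows "(\<lambda>n. expkern_coeff a b n * t ^ n) sums ((exp (t * b) - exp (t * a)) / t)"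
proof -
  have "(\<lambda>n. (t * b) ^ n / fact n - (t * a) ^ n / fact n) sums (exp (t * b) - exp (t * a))"
    using sums_diff[OF exp_converges[of "t * b"] exp_converges[of "t * a"]]
    by (simp add: divide_inverse mult.commute)
  hence "(\<lambda>n. (t * b) ^ Suc n / fact (Suc n) - (t * a) ^ Suc n / fact (Suc n))
           sums (exp (t * b) - exp (t * a))"
    by (subst sums_Suc_iff) simp
  hence "(\<lambda>n. ((t * b) ^ Suc n / fact (Suc n) - (t * a) ^ Suc n / fact (Suc n)) / t)
           sums ((exp (t * b) - exp (t * a)) / t)"
    by (rule sums_divide)
  moreover have "((t * b) ^ Suc n / fact (Suc n) - (t * a) ^ Suc n / fact (Suc n)) / t
                   = expkern_coeff a b n * t ^ n" for n
  proof -
    have "((t * b) ^ Suc n / f - (t * a) ^ Suc n / f) / t = (b ^ Suc n - a ^ Suc n) / f * t ^ n"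
      if "f \<noteq> 0" for f :: real
      using assms that by (simp add: power_mult_distrib field_simps)
    thus ?thesis unfolding expkern_coeff_def by (metis fact_nonzero)
  qed
  ultimately show ?thesis by simp
qed

lemma expkern_summable: "summable (\<lambda>n. expkern_coeff a b n * t ^ n)"
  using expkern_sums[of t a b] by (cases "t = 0") (auto simp: sums_summable)

lemma expkern_eq: "t \<noteq> 0 \<Longrightarrow> expkern a b t = (exp (t * b) - exp (t * a)) / t"
  unfolding expkern_def using expkern_sums sums_unique by metis

lemma expkern_0: "expkern a b 0 = b - a"
  unfolding expkern_def by (simp only: powser_zero) (simp add: expkern_coeff_def)

lemma expkern'_0: "expkern' a b 0 = (b\<^sup>2 - a\<^sup>2) / 2"
  unfolding expkern'_def
  by (simp only: powser_zero) (simp add: expkern_coeff_def diffs_def numeral_2_eq_2)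

lemma expkern_deriv: "(expkern a b has_real_derivative expkern' a b t) (at t)"
  unfolding expkern_def expkern'_def
  by (rule termdiffs_strong_converges_everywhere) (rule expkern_summable)

lemma expkern'_differentiable: "expkern' a b differentiable at t"
  unfolding expkern'_def
  using termdiffs_strong_converges_everywhere[OF termdiff_converges_all[OF expkern_summable]]
  by (auto simp: real_differentiable_def)

lemma expkern'_eq:
  assumes "t \<noteq> 0"
  shows "expkern' a b t = ((b * exp (t * b) - a * exp (t * a)) * t - (exp (t * b) - exp (t * a))) / t\<^sup>2"
proof -
  have "((\<lambda>t. (exp (t * b) - exp (t * a)) / t) has_real_derivative expkern' a b t) (at t)"
    by (rule has_field_derivative_transform_within_open[OF expkern_deriv, where S = "- {0}"])
       (use assms expkern_eq in auto)
  moreover have "((\<lambda>t. (exp (t * b) - exp (t * a)) / t) has_real_derivative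
     (((exp (t * b) * b - exp (t * a) * a) * t - (exp (t * b) - exp (t * a)) * 1) / (t * t))) (at t)"
    using assms by (auto intro!: derivative_eq_intros)
  ultimately show ?thesis
    by (auto dest: DERIV_unique simp: power2_eq_square algebra_simps)
qed

text \<open>K has the sign of b - a, since e^(tu) > 0.\<close>
lemma expkern_sign: assumes "a \<noteq> b" shows "(b - a) * expkern a b t > 0"
proof (cases "t = 0")
  case True thus ?thesis using assms by (simp add: expkern_0 power2_eq_square[symmetric])
next
  case False
  have "t * b \<noteq> t * a" using False assms by simp
  hence "t * b < t * a \<or> t * a < t * b" by linarith
  hence "(t * b - t * a) * (exp (t * b) - exp (t * a)) > 0"
    by (auto simp: zero_less_mult_iff)
  moreover have "(t * b - t * a) * (exp (t * b) - exp (t * a)) / t\<^sup>2 = (b - a) * expkern a b t"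
    using False by (simp add: expkern_eq power2_eq_square field_simps)
  ultimately show ?thesis using False by (metis divide_pos_pos zero_less_power2)
qed

lemma expkern_nonzero: "a \<noteq> b \<Longrightarrow> expkern a b t \<noteq> 0"
  using expkern_sign[of a b t] by auto

lemma expkern_normalized_pos: "a \<noteq> b \<Longrightarrow> expkern a b t / (b - a) > 0"
  using expkern_sign[of a b t] by (auto simp: zero_less_mult_iff zero_less_divide_iff)

lemma expkern_ratio_pos:
  assumes "a \<noteq> b" shows "expkern a b u / expkern a b t > 0"
proof -
  have "expkern a b u / expkern a b t = (expkern a b u / (b - a)) / (expkern a b t / (b - a))"
    using assms by simp
  also have "\<dots> > 0" by (intro divide_pos_pos expkern_normalized_pos assms)
  finally show ?thesis .
qed

text \<open>Reflection of the kernel, from the substitution u \<mapsto> a + b - u.\<close>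
lemma expkern_reflect: "expkern a b (- t) = expkern a b t * exp (- t * (a + b))"
proof (cases "t = 0")
  case True thus ?thesis by simp
next
  case False
  thus ?thesis by (simp add: expkern_eq field_simps exp_add[symmetric] exp_diff[symmetric])
qed

section \<open>Divided differences\<close>

definition divdiff :: "(real \<Rightarrow> real) \<Rightarrow> real \<Rightarrow> real \<Rightarrow> real" where
  "divdiff f t u = (if t = u then deriv f t else (f u - f t) / (u - t))"

lemma divdiff_commute: "divdiff f t u = divdiff f u t"
  unfolding divdiff_def by (metis minus_diff_eq minus_divide_divide)

lemma divdiff_reflect:
  assumes diff: "\<And>t. f differentiable at t" and refl: "\<And>t. f (- t) = f t - c * t"
  shows "divdiff f (- t) (- u) = c - divdiff f t u"
proof (cases "t = u")
  case True
  have "((\<lambda>t. f (- t)) has_real_derivative deriv f (- t) * (- 1)) (at t)"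
    by (rule DERIV_chain2) (auto intro!: derivative_eq_intros
        simp: DERIV_deriv_iff_real_differentiable diff)
  moreover have "((\<lambda>t. f t - c * t) has_real_derivative deriv f t - c * 1) (at t)"
    by (auto intro!: derivative_eq_intros simp: DERIV_deriv_iff_real_differentiable diff)
  ultimately have "deriv f (- t) = c - deriv f t"
    unfolding refl by (auto dest: DERIV_unique)
  thus ?thesis using True by (simp add: divdiff_def)
next
  case False
  hence "u - t \<noteq> 0" by simp
  have "divdiff f (- t) (- u) = ((f u - f t) - c * (u - t)) / (- (u - t))"
    using False refl[of t] refl[of u] by (simp add: divdiff_def algebra_simps)
  also have "\<dots> = c - divdiff f t u"
    using False \<open>u - t \<noteq> 0\<close> by (simp add: divdiff_def field_simps)
  finally show ?thesis .
qed

text \<open>If f and f' are differentiable, so is the divided difference along a diagonal shift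
  of the nodes; on the diagonal itself this needs the second derivative.\<close>
lemma divdiff_shift_differentiable:
  assumes "\<And>t. f differentiable at t" and "\<And>t. deriv f differentiable at t"
  shows "(\<lambda>w. divdiff f (r + w) (s + w)) differentiable at w"
proof (cases "r = s")
  case True
  hence "(\<lambda>w. divdiff f (r + w) (s + w)) = (\<lambda>w. deriv f (r + w))"
    by (simp add: divdiff_def)
  moreover have "(\<lambda>w. deriv f (r + w)) differentiable at w"
    by (rule differentiable_compose[OF assms(2)]) simp
  ultimately show ?thesis by simp
next
  case False
  hence "(\<lambda>w. divdiff f (r + w) (s + w)) = (\<lambda>w. (f (s + w) - f (r + w)) / (s - r))"
    by (simp add: divdiff_def)
  moreover have "(\<lambda>w. f (s + w)) differentiable at w" "(\<lambda>w. f (r + w)) differentiable at w"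
    by (rule differentiable_compose[OF assms(1)], simp)+
  ultimately show ?thesis using False by simp
qed

section \<open>The logarithmic kernel\<close>

text \<open>Logarithm of the mean value of e^(tu) over [a,b]; for a = b that mean is e^(at).\<close>
definition logkern :: "real \<Rightarrow> real \<Rightarrow> real \<Rightarrow> real" where
  "logkern a b t = (if a = b then a * t else ln (expkern a b t / (b - a)))"

lemma logkern_degenerate_deriv: "(logkern a a has_real_derivative a) (at t)"
proof -
  have "((\<lambda>t. a * t) has_real_derivative a * 1) (at t)" by (rule DERIV_cmult[OF DERIV_ident])
  moreover have "logkern a a = (\<lambda>t. a * t)" by (simp add: logkern_def fun_eq_iff)
  ultimately show ?thesis by simp
qed

lemma logkern_deriv:
  assumes "a \<noteq> b"
  shows "(logkern a b has_real_derivative expkern' a b t / expkern a b t) (at t)"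
proof -
  have eq: "logkern a b = (\<lambda>t. ln (expkern a b t / (b - a)))"
    using assms by (simp add: logkern_def fun_eq_iff)
  have "((\<lambda>t. ln (expkern a b t / (b - a))) has_real_derivative
          inverse (expkern a b t / (b - a)) * (expkern' a b t / (b - a))) (at t)"
    by (rule DERIV_chain2[where f = ln and g = "\<lambda>t. expkern a b t / (b - a)",
          OF DERIV_ln[OF expkern_normalized_pos[OF assms]] DERIV_cdivide[OF expkern_deriv]])
  moreover have "inverse (expkern a b t / (b - a)) * (expkern' a b t / (b - a))
           = expkern' a b t / expkern a b t"
    using assms expkern_nonzero[OF assms] by (simp add: field_simps)
  ultimately show ?thesis unfolding eq by simp
qed

lemma logkern_differentiable: "logkern a b differentiable at t"
  using logkern_deriv[of a b t] logkern_degenerate_deriv[of a t]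
  by (cases "a = b") (auto simp: real_differentiable_def)

lemma deriv_logkern_differentiable: "deriv (logkern a b) differentiable at t"
proof (cases "a = b")
  case True
  hence "deriv (logkern a b) = (\<lambda>t. a)"
    by (intro ext DERIV_imp_deriv) (simp add: logkern_degenerate_deriv)
  thus ?thesis by simp
next
  case False
  hence "deriv (logkern a b) = (\<lambda>t. expkern' a b t / expkern a b t)"
    by (intro ext DERIV_imp_deriv logkern_deriv)
  thus ?thesis
    using expkern'_differentiable expkern_deriv expkern_nonzero[OF False]
    by (simp add: real_differentiable_def) (blast intro: DERIV_divide)
qed

lemma logkern_reflect: "logkern a b (- t) = logkern a b t - (a + b) * t"
proof (cases "a = b")
  case False
  have "logkern a b (- t) = ln (expkern a b t / (b - a) * exp (- t * (a + b)))"
    using False by (simp add: logkern_def expkern_reflect)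
  also have "\<dots> = ln (expkern a b t / (b - a)) + ln (exp (- t * (a + b)))"
    by (rule ln_mult_pos) (simp_all add: expkern_normalized_pos[OF False])
  also have "\<dots> = logkern a b t - (a + b) * t"
    using False by (simp add: logkern_def)
  finally show ?thesis .
qed (simp add: logkern_def algebra_simps)

section \<open>Extended means as exponentials of divided differences\<close>

lemma extmean_offdiag:
  assumes "x > 0" "y > 0" "x \<noteq> y" "t \<noteq> u"
  shows "extmean t u x y = (expkern (ln x) (ln y) u / expkern (ln x) (ln y) t) powr (1 / (u - t))"
proof -
  let ?a = "ln x" and ?b = "ln y"
  have ab: "?a \<noteq> ?b" using assms by simp
  have px: "\<And>z. x powr z = exp (z * ?a)" "\<And>z. y powr z = exp (z * ?b)"
    using assms by (auto simp: powr_def)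
  have nz: "\<And>z. z \<noteq> 0 \<Longrightarrow> exp (z * ?b) - exp (z * ?a) \<noteq> 0"
    using ab by auto
  consider "t \<noteq> 0" "u \<noteq> 0" | "u = 0" | "t = 0" using assms by auto
  thus ?thesis
  proof cases
    case 1
    thus ?thesis using assms unfolding extmean_def by (simp add: px expkern_eq nz field_simps)
  next
    case 2
    hence "t \<noteq> 0" using assms by simp
    have q: "expkern ?a ?b t / expkern ?a ?b 0 > 0" by (rule expkern_ratio_pos[OF ab])
    have "extmean t u x y = (expkern ?a ?b t / expkern ?a ?b 0) powr (1 / t)"
      using 2 \<open>t \<noteq> 0\<close> assms unfolding extmean_def by (simp add: px expkern_eq expkern_0)
    also have "\<dots> = (expkern ?a ?b 0 / expkern ?a ?b t) powr (1 / (0 - t))"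
    proof -
      have "z powr (1 / t) = (1 / z) powr (1 / (0 - t))" if "z > 0" for z :: real
        using that by (simp add: powr_def ln_div)
      from this[OF q] show ?thesis by simp
    qed
    finally show ?thesis using 2 by simp
  next
    case 3
    thus ?thesis using assms unfolding extmean_def by (simp add: px expkern_eq expkern_0)
  qed
qed

lemma extmean_diag:
  assumes "x > 0" "y > 0" "x \<noteq> y"
  shows "extmean t t x y = exp (expkern' (ln x) (ln y) t / expkern (ln x) (ln y) t)"
proof -
  let ?a = "ln x" and ?b = "ln y"
  have ab: "?a \<noteq> ?b" using assms by simp
  have px: "\<And>z. x powr z = exp (z * ?a)" "\<And>z. y powr z = exp (z * ?b)"
    using assms by (auto simp: powr_def)
  show ?thesis
  proof (cases "t = 0")
    case True
    have "sqrt (x * y) = exp ((?a + ?b) / 2)"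
      using assms by (simp add: powr_half_sqrt[symmetric] powr_def ln_mult)
    also have "\<dots> = exp (expkern' ?a ?b 0 / expkern ?a ?b 0)"
      using ab by (simp add: expkern'_0 expkern_0 power2_eq_square field_simps)
    finally show ?thesis using True assms unfolding extmean_def by simp
  next
    case False
    have nz: "exp (t * ?b) - exp (t * ?a) \<noteq> 0" "exp (t * ?a) - exp (t * ?b) \<noteq> 0"
      using ab False by auto
    have "extmean t t x y = exp (- 1 / t) * (exp (exp (t * ?a) * ?a) / exp (exp (t * ?b) * ?b))
                              powr (1 / (exp (t * ?a) - exp (t * ?b)))"
      using assms False unfolding extmean_def by (simp add: px)
    also have "\<dots> = exp (- 1 / t + (exp (t * ?a) * ?a - exp (t * ?b) * ?b) / (exp (t * ?a) - exp (t * ?b)))"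
      by (simp add: powr_def exp_diff[symmetric] exp_add[symmetric])
    also have "\<dots> = exp (expkern' ?a ?b t / expkern ?a ?b t)"
      using False nz by (simp add: expkern'_eq expkern_eq field_simps power2_eq_square)
    finally show ?thesis .
  qed
qed

lemma extmean_exp_divdiff:
  assumes "x > 0" "y > 0"
  shows "extmean t u x y = exp (divdiff (logkern (ln x) (ln y)) t u)"
proof (cases "x = y")
  case True
  have "divdiff (logkern (ln x) (ln x)) t u = ln x"
    using DERIV_imp_deriv[OF logkern_degenerate_deriv]
    by (simp add: divdiff_def logkern_def right_diff_distrib[symmetric])
  thus ?thesis using True assms by (simp add: extmean_def)
next
  case False
  let ?a = "ln x" and ?b = "ln y"
  have ab: "?a \<noteq> ?b" using False assms by simp
  show ?thesis
  proof (cases "t = u")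
    case True
    thus ?thesis using extmean_diag[OF assms False] DERIV_imp_deriv[OF logkern_deriv[OF ab]]
      by (simp add: divdiff_def)
  next
    case tu: False
    have "logkern ?a ?b u - logkern ?a ?b t
            = ln (expkern ?a ?b u / (?b - ?a)) - ln (expkern ?a ?b t / (?b - ?a))"
      using ab by (simp add: logkern_def)
    also have "\<dots> = ln ((expkern ?a ?b u / (?b - ?a)) / (expkern ?a ?b t / (?b - ?a)))"
      by (rule ln_divide_pos[symmetric]) (intro expkern_normalized_pos ab)+
    also have "\<dots> = ln (expkern ?a ?b u / expkern ?a ?b t)"
      using ab by simp
    finally have "logkern ?a ?b u - logkern ?a ?b t = ln (expkern ?a ?b u / expkern ?a ?b t)" .
    thus ?thesis
      using extmean_offdiag[OF assms False tu] expkern_ratio_pos[OF ab, of u t] tu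
            expkern_nonzero[OF ab]
      by (simp add: divdiff_def powr_def)
  qed
qed

section \<open>The shifted mean F(w) = E(r+w, s+w)\<close>

text \<open>F = exp \<circ> (shifted divided difference of \<psi>) is positive and differentiable.\<close>
lemma shifted_extmean_pos_differentiable:
  assumes "x > 0" "y > 0"
  shows "extmean (r + w) (s + w) x y > 0"
    and "(\<lambda>w. extmean (r + w) (s + w) x y) differentiable at w"
  using differentiable_compose[OF _ divdiff_shift_differentiable[OF logkern_differentiable
          deriv_logkern_differentiable], of exp]
  by (simp_all add: extmean_exp_divdiff[OF assms] field_differentiable_imp_differentiable
      field_differentiable_within_exp)

lemma shifted_extmean_reflect:
  assumes "x > 0" "y > 0"
  shows "extmean (r + w) (s + w) x y * extmean (r + (- (s + r) - w)) (s + (- (s + r) - w)) x y = x * y"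
proof -
  let ?\<psi> = "logkern (ln x) (ln y)" and ?c = "ln x + ln y"
  have "divdiff ?\<psi> (r + (- (s + r) - w)) (s + (- (s + r) - w)) = divdiff ?\<psi> (- (s + w)) (- (r + w))"
    by (simp add: algebra_simps)
  also have "\<dots> = ?c - divdiff ?\<psi> (r + w) (s + w)"
    by (subst divdiff_reflect[OF logkern_differentiable logkern_reflect])
       (simp add: divdiff_commute)
  moreover have "exp ?c = x * y" using assms by (simp add: exp_add)
  ultimately show ?thesis
    using assms by (simp add: extmean_exp_divdiff exp_add[symmetric])
qed

lemma product_reflection_deriv:
  fixes F :: "real \<Rightarrow> real"
  assumes diff: "\<And>w. F differentiable at w" and prod: "\<And>w. F w * F (k - w) = C"
  shows "deriv F w * F (k - w) = F w * deriv F (k - w)"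
proof -
  have dF: "\<And>v. (F has_real_derivative deriv F v) (at v)"
    using diff by (simp add: DERIV_deriv_iff_real_differentiable)
  have "((\<lambda>w. F (k - w)) has_real_derivative deriv F (k - w) * (- 1)) (at w)"
    by (rule DERIV_chain2[OF dF]) (auto intro!: derivative_eq_intros)
  from DERIV_mult[OF dF this]
  have "((\<lambda>w. F w * F (k - w)) has_real_derivative
          deriv F w * F (k - w) + deriv F (k - w) * (- 1) * F w) (at w)" .
  moreover have "((\<lambda>w. F w * F (k - w)) has_real_derivative 0) (at w)"
    unfolding prod by simp
  ultimately show ?thesis by (auto dest: DERIV_unique)
qed

theorem mainTheorem7:
  fixes x y r s :: real
  assumes "x > 0" and "y > 0"
  defines "F \<equiv> (\<lambda>w. extmean (r + w) (s + w) x y)"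
  shows "\<forall>w. deriv F w / F w = deriv F (- w - (s + r)) / F (- w - (s + r))
            \<and> F w * F (- w) = x * y * F w / F (w - (s + r))"
proof
  fix w
  have pos: "\<And>v. F v > 0" and diff: "\<And>v. F differentiable at v"
    unfolding F_def using shifted_extmean_pos_differentiable[OF assms(1,2)] by auto
  have prod: "\<And>v. F v * F (- (s + r) - v) = x * y"
    unfolding F_def by (rule shifted_extmean_reflect[OF assms(1,2)])
  have "- (s + r) - w = - w - (s + r)" by simp
  hence "deriv F w * F (- w - (s + r)) = F w * deriv F (- w - (s + r))"
    using product_reflection_deriv[OF diff prod, of w] by (simp only:)
  hence "deriv F w / F w = deriv F (- w - (s + r)) / F (- w - (s + r))"
    using pos[of w] pos[of "- w - (s + r)"] by (simp add: field_simps)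
  moreover have "F w * F (- w) = x * y * F w / F (w - (s + r))"
    using prod[of "- w"] pos[of "w - (s + r)"] by (simp add: field_simps)
  ultimately show "deriv F w / F w = deriv F (- w - (s + r)) / F (- w - (s + r))
                     \<and> F w * F (- w) = x * y * F w / F (w - (s + r))" ..
qed

end
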